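(* Let $k$ be a positive integer. For any approval-dependent scoring rule $f$ and any instance $\mathcal{I}_{m,\mathcal{A}_n,k}$ in which some item has positive score, $P(\mathcal{I}_{m,\mathcal{A}_n,k},f)\le k$; hence $P(k,f)\le k$. Moreover, this bound is attained for certain approval-dependent scoring rules: in particular, for maximin diverse approval $f_{DA}$ with $\gamma>1$ groups, $P(k,f_{DA})=k$.
   Context: An instance $\mathcal{I}_{m,\mathcal{A}_n,k}=\langle m,\mathcal{A}_n,k\rangle$ consists of items $[m]$, users $[n]$, an approval profile $\mathcal{A}_n=(A_1,\dots,A_n)$ with $A_u\subseteq[m]$, and a target size $k\le m$. A scoring rule assigns each item $i$ a score $f(i,\mathcal{A}_n)\ge0$, additive over sets: $f(S)=\sum_{i\in S}f(i,\mathcal{A}_n)$. The rule is approval-dependent if $f(i,\mathcal{A}_n)=0$ for every item $i\notin\bigcup_{u=1}^nA_u$. Maximin diverse approval: users are partitioned into $\gamma$ nonempty groups $G_1,\dots,G_\gamma$ and $f_{DA}(i,\mathcal{A}_n)=\min_{g\in[\gamma]}\frac{1}{|G_g|}|\{u\in G_g: i\in A_u\}|$. A group $G\subseteq[n]$ is cohesive if $\bigcap_{u\in G}A_u\ne\emptyset$; $S$ represents $G$ if some $u\in G$ has $A_u\cap S\ne\emptyset$; $S$ satisfies justified representation (JR) if $|S|=k$ and $S$ represents every cohesive group of at least $n/k$ users. $S^*$ maximizes $f(S)$ over $|S|=k$; $S^*_{JR}$ maximizes $f(S)$ over sets satisfying JR. The price of JR is $P(\mathcal{I}_{m,\mathcal{A}_n,k},f)=f(S^*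 )/f(S^*_{JR})$ and $P(k,f)=\max_{\mathcal{I}_{m,\mathcal{A}_n,k}}P(\mathcal{I}_{m,\mathcal{A}_n,k},f)$ over all instances with set size $k$ (for $f_{DA}$, instances include the group partition). *)

theory Defs
  imports Complex_Main
begin

text \<open>Items are {..<m}, users are {..<n}; an approval profile is A :: nat => nat set,
  of which only A 0, ..., A (n-1) are relevant. A scoring rule is a function
  f m n A i giving the score of item i in the instance with m items, n users, profile A.\<close>

type_synonym profile = "nat \<Rightarrow> nat set"
type_synonym scoring_rule = "nat \<Rightarrow> nat \<Rightarrow> profile \<Rightarrow> nat \<Rightarrow> real"

definition valid_instance :: "nat \<Rightarrow> nat \<Rightarrow> profile \<Rightarrow> nat \<Rightarrow> bool" where
  "valid_instance m n A k \<longleftrightarrow> k \<le> m \<and> (\<forall>u<n. A u \<subseteq> {..<m})"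

definition nonneg_rule :: "scoring_rule \<Rightarrow> bool" where
  "nonneg_rule f \<longleftrightarrow> (\<forall>m n A i. 0 \<le> f m n A i)"

definition approval_dependent :: "scoring_rule \<Rightarrow> bool" where
  "approval_dependent f \<longleftrightarrow>
     (\<forall>m n A i. i \<notin> (\<Union>u\<in>{..<n}. A u) \<longrightarrow> f m n A i = 0)"

definition set_score :: "scoring_rule \<Rightarrow> nat \<Rightarrow> nat \<Rightarrow> profile \<Rightarrow> nat set \<Rightarrow> real" where
  "set_score f m n A S = (\<Sum>i\<in>S. f m n A i)"

definition cohesive :: "nat \<Rightarrow> profile \<Rightarrow> nat set \<Rightarrow> bool" where
  "cohesive n A G \<longleftrightarrow> G \<subseteq> {..<n} \<and> (\<Inter>u\<in>G. A u) \<noteq> {}"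

definition represents :: "profile \<Rightarrow> nat set \<Rightarrow> nat set \<Rightarrow> bool" where
  "represents A S G \<longleftrightarrow> (\<exists>u\<in>G. A u \<inter> S \<noteq> {})"

definition satisfies_JR :: "nat \<Rightarrow> nat \<Rightarrow> profile \<Rightarrow> nat \<Rightarrow> nat set \<Rightarrow> bool" where
  "satisfies_JR m n A k S \<longleftrightarrow> S \<subseteq> {..<m} \<and> card S = k \<and>
     (\<forall>G. cohesive n A G \<and> real (card G) \<ge> real n / real k \<longrightarrow> represents A S G)"

definition opt_score :: "scoring_rule \<Rightarrow> nat \<Rightarrow> nat \<Rightarrow> profile \<Rightarrow> nat \<Rightarrow> real" where
  "opt_score f m n A k = Max {set_score f m n A S | S. S \<subseteq> {..<m} \<and> card S = k}"

definition opt_JR_score :: "scoring_rule \<Rightarrow> nat \<Rightarrow> nat \<Rightarrow> profile \<Rightarrow> nat \<Rightarrow> real" where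
  "opt_JR_score f m n A k = Max {set_score f m n A S | S. satisfies_JR m n A k S}"

definition price_of_JR :: "scoring_rule \<Rightarrow> nat \<Rightarrow> nat \<Rightarrow> profile \<Rightarrow> nat \<Rightarrow> real" where
  "price_of_JR f m n A k = opt_score f m n A k / opt_JR_score f m n A k"

text \<open>Group partitions: grp u \<in> {..<\<gamma>} is the group of user u; group g is
  G_g = {u<n. grp u = g}; all groups nonempty.\<close>

definition group_partition :: "nat \<Rightarrow> nat \<Rightarrow> (nat \<Rightarrow> nat) \<Rightarrow> bool" where
  "group_partition n \<gamma> grp \<longleftrightarrow> (\<forall>u<n. grp u < \<gamma>) \<and> (\<forall>g<\<gamma>. \<exists>u<n. grp u = g)"

definition f_DA :: "nat \<Rightarrow> (nat \<Rightarrow> nat) \<Rightarrow> scoring_rule" where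
  "f_DA \<gamma> grp m n A i =
     Min ((\<lambda>g. real (card {u\<in>{..<n}. grp u = g \<and> i \<in> A u}) / real (card {u\<in>{..<n}. grp u = g}))
          ` {..<\<gamma>})"

definition DA_prices :: "nat \<Rightarrow> nat \<Rightarrow> real set" where
  "DA_prices k \<gamma> = {price_of_JR (f_DA \<gamma> grp) m n A k | m n A grp.
      valid_instance m n A k \<and> group_partition n \<gamma> grp \<and> (\<exists>i<m. f_DA \<gamma> grp m n A i > 0)}"

end

theory Submission
  imports Defs
begin

text \<open>
  Let \<open>M\<close> be the largest item score. Any \<open>k\<close>-set scores at most \<open>k M\<close>, so it suffices to
  find a JR set containing an item \<open>i\<close> of score \<open>M > 0\<close>; \<open>i\<close> is approved by some user since
  the rule is approval-dependent. Such a set is built greedily: starting from \<open>{i}\<close>, as long as some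
  cohesive group of at least \<open>n/k\<close> users is unrepresented, add one of its common items. Every step
  covers at least \<open>n/k\<close> new users, so after \<open>k - 1\<close> steps an unrepresented group would make more
  than \<open>n\<close> users covered; hence at most \<open>k\<close> items suffice.

  For tightness with \<open>f\<^sub>D\<^sub>A\<close>, \<open>k - 1\<close> disjoint blocks of \<open>n/k\<close> users, each approving its own
  item, force \<open>k - 1\<close> slots of every JR set onto items that some group ignores (score 0), while
  \<open>k\<close> items approved by one user of every group have equal positive score.
\<close>

lemma finite_scores_of_subsets:
  fixes m :: nat
  assumes "\<And>S. P S \<Longrightarrow> S \<subseteq> {..<m}"
  shows "finite {g S | S. P S}"
proof -
  have "{g S | S. P S} \<subseteq> g ` Pow {..<m}" using assms by auto
  then show ?thesis by (rule finite_subset) (intro finite_imageI, simp)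
qed

lemma set_score_le_opt_score:
  assumes "S \<subseteq> {..<m}" "card S = k"
  shows "set_score f m n A S \<le> opt_score f m n A k"
  unfolding opt_score_def using assms
  by (intro Max_ge finite_scores_of_subsets) auto

lemma opt_score_le:
  assumes "k \<le> m" and "\<And>S. S \<subseteq> {..<m} \<Longrightarrow> card S = k \<Longrightarrow> set_score f m n A S \<le> c"
  shows "opt_score f m n A k \<le> c"
proof -
  have "set_score f m n A {..<k} \<in> {set_score f m n A S | S. S \<subseteq> {..<m} \<and> card S = k}"
    using assms(1) by auto
  then show ?thesis
    unfolding opt_score_def using assms(2)
    by (subst Max_le_iff) (auto intro: finite_scores_of_subsets)
qed

lemma opt_score_le_mult:
  assumes "k \<le> m" and "\<And>i. i < m \<Longrightarrow> f m n A i \<le> c"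
  shows "opt_score f m n A k \<le> real k * c"
proof (rule opt_score_le[OF assms(1)])
  fix S assume "S \<subseteq> {..<m}" "card S = k"
  then show "set_score f m n A S \<le> real k * c"
    unfolding set_score_def using sum_mono[of S "f m n A" "\<lambda>_. c"] assms(2) by auto
qed

lemma set_score_le_opt_JR_score:
  assumes "satisfies_JR m n A k S"
  shows "set_score f m n A S \<le> opt_JR_score f m n A k"
  unfolding opt_JR_score_def using assms
  by (intro Max_ge finite_scores_of_subsets) (auto simp: satisfies_JR_def)

lemma opt_JR_score_le:
  assumes "satisfies_JR m n A k S\<^sub>0"
    and "\<And>S. satisfies_JR m n A k S \<Longrightarrow> set_score f m n A S \<le> c"
  shows "opt_JR_score f m n A k \<le> c"
  unfolding opt_JR_score_def using assms
  by (subst Max_le_iff) (auto intro: finite_scores_of_subsets simp: satisfies_JR_def)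

lemma card_disjoint_Un_le:
  assumes "finite C" "A \<union> B \<subseteq> C" "A \<inter> B = {}"
  shows "card A + card B \<le> card C"
  using assms card_Un_disjoint[of A B] card_mono[OF assms(1,2)] finite_subset[OF _ assms(1)] by auto

definition represents_large_cohesive :: "nat \<Rightarrow> profile \<Rightarrow> nat \<Rightarrow> nat set \<Rightarrow> bool" where
  "represents_large_cohesive n A k S \<longleftrightarrow>
     (\<forall>G. cohesive n A G \<and> real (card G) \<ge> real n / real k \<longrightarrow> represents A S G)"

definition covered :: "nat \<Rightarrow> profile \<Rightarrow> nat set \<Rightarrow> nat set" where
  "covered n A S = {u\<in>{..<n}. A u \<inter> S \<noteq> {}}"

lemma represents_large_cohesive_mono:
  "represents_large_cohesive n A k S \<Longrightarrow> S \<subseteq> T \<Longrightarrow> represents_large_cohesive n A k T"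
  unfolding represents_large_cohesive_def represents_def by blast

lemma satisfies_JR_iff:
  "satisfies_JR m n A k S \<longleftrightarrow> S \<subseteq> {..<m} \<and> card S = k \<and> represents_large_cohesive n A k S"
  unfolding satisfies_JR_def represents_large_cohesive_def ..

lemma unrepresented_cohesive_group:
  assumes "\<not> represents_large_cohesive n A k S"
  obtains G where "cohesive n A G" "real n / real k \<le> real (card G)" "covered n A S \<inter> G = {}"
  using assms unfolding represents_large_cohesive_def represents_def covered_def by blast

lemma card_covered_add_le:
  assumes "\<not> represents_large_cohesive n A k S"
  shows "real (card (covered n A S)) + real n / real k \<le> real n"
proof -
  obtain G where G: "cohesive n A G" "real n / real k \<le> real (card G)" "covered n A S \<inter> G = {}"
    using unrepresented_cohesive_group[OF assms] .
  have "card (covered n A S) + card G \<le> card {..<n}"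
    using G(1,3) by (intro card_disjoint_Un_le) (auto simp: covered_def cohesive_def)
  then have "real (card (covered n A S)) + real (card G) \<le> real n"
    by (simp flip: of_nat_add)
  then show ?thesis using G(2) by linarith
qed

lemma greedy_step:
  assumes "valid_instance m n A k" "0 < n" "1 \<le> k"
    and "\<not> represents_large_cohesive n A k S"
  obtains c where "c < m" "c \<notin> S"
    "real (card (covered n A S)) + real n / real k \<le> real (card (covered n A (insert c S)))"
proof -
  obtain G where G: "cohesive n A G" "real n / real k \<le> real (card G)" "covered n A S \<inter> G = {}"
    using unrepresented_cohesive_group[OF assms(4)] .
  have Gn: "G \<subseteq> {..<n}" using G(1) unfolding cohesive_def by simp
  have "0 < real n / real k" using assms(2,3) by simp
  then obtain u where u: "u \<in> G" using G(2) by fastforce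
  obtain c where c: "\<And>v. v \<in> G \<Longrightarrow> c \<in> A v" using G(1) unfolding cohesive_def by blast
  have "c < m" using c[OF u] u Gn assms(1) unfolding valid_instance_def by auto
  moreover have "c \<notin> S" using c[OF u] u Gn G(3) unfolding covered_def by auto
  moreover have "card (covered n A S) + card G \<le> card (covered n A (insert c S))"
    using G(3) Gn c by (intro card_disjoint_Un_le) (auto simp: covered_def)
  then have "real (card (covered n A S)) + real (card G) \<le> real (card (covered n A (insert c S)))"
    by (simp flip: of_nat_add)
  ultimately show ?thesis using that G(2) by simp
qed

lemma greedy_representative_set:
  assumes "valid_instance m n A k" "1 \<le> k" "u < n" "i \<in> A u" "j < k"
  shows "\<exists>S \<subseteq> {..<m}. card S \<le> Suc j \<and> i \<in> S \<and>
    (represents_large_cohesive n A k S \<or> 1 + real j * real n / real k \<le> real (card (covered n A S)))"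
  using \<open>j < k\<close>
proof (induction j)
  case 0
  have "u \<in> covered n A {i}" using assms(3,4) unfolding covered_def by auto
  moreover have "finite (covered n A {i})" unfolding covered_def by simp
  ultimately have "1 \<le> card (covered n A {i})"
    by (auto simp: Suc_le_eq card_gt_0_iff)
  moreover have "i < m" using assms(1,3,4) unfolding valid_instance_def by auto
  ultimately show ?case by (intro exI[of _ "{i}"]) auto
next
  case (Suc j)
  then obtain S where S: "S \<subseteq> {..<m}" "card S \<le> Suc j" "i \<in> S"
    "represents_large_cohesive n A k S \<or> 1 + real j * real n / real k \<le> real (card (covered n A S))"
    by auto
  show ?case
  proof (cases "represents_large_cohesive n A k S")
    case True
    then show ?thesis using S by auto
  next
    case False
    then obtain c where c: "c < m" "c \<notin> S"
      "real (card (covered n A S)) + real n / real k \<le> real (card (covered n A (insert c S)))"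
      using greedy_step[OF assms(1) _ assms(2)] assms(3) by auto
    have "1 + real (Suc j) * real n / real k \<le> real (card (covered n A (insert c S)))"
      using S(4) False c(3) by (simp add: distrib_right add_divide_distrib)
    moreover have "card (insert c S) \<le> Suc (Suc j)"
      using S(1,2) finite_subset[OF S(1)] by (simp add: card_insert_if)
    ultimately show ?thesis using S(1,3) c(1) by (intro exI[of _ "insert c S"]) auto
  qed
qed

lemma exists_JR_set_containing:
  assumes "valid_instance m n A k" "1 \<le> k" "u < n" "i \<in> A u"
  obtains S where "satisfies_JR m n A k S" "i \<in> S"
proof -
  obtain S where S: "S \<subseteq> {..<m}" "card S \<le> k" "i \<in> S"
    "represents_large_cohesive n A k S \<or> 1 + real (k - 1) * real n / real k \<le> real (card (covered n A S))"
    using greedy_representative_set[OF assms, of "k - 1"] assms(2) by auto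
  have "1 + real (k - 1) * real n / real k + real n / real k = 1 + real n"
    using assms(2) by (simp add: field_simps of_nat_diff)
  then have rep: "represents_large_cohesive n A k S"
    using S(4) card_covered_add_le[of n A k S] by fastforce
  obtain T where "S \<subseteq> T" "T \<subseteq> {..<m}" "card T = k"
    using exists_subset_between[OF S(2) _ S(1)] assms(1) unfolding valid_instance_def by auto
  then show ?thesis
    using that represents_large_cohesive_mono[OF rep] S(3) unfolding satisfies_JR_iff by blast
qed

lemma score_le_opt_JR_score:
  assumes "nonneg_rule f" "approval_dependent f" "valid_instance m n A k" "1 \<le> k"
    and "0 < f m n A i"
  shows "f m n A i \<le> opt_JR_score f m n A k"
proof -
  have "i \<in> (\<Union>u\<in>{..<n}. A u)"
    using assms(2,5) unfolding approval_dependent_def by (metis less_irrefl)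
  then obtain u where u: "u < n" "i \<in> A u" by blast
  obtain S where S: "satisfies_JR m n A k S" "i \<in> S"
    using exists_JR_set_containing[OF assms(3,4) u] .
  have "finite S" using S(1) finite_subset unfolding satisfies_JR_def by blast
  then have "f m n A i \<le> set_score f m n A S"
    unfolding set_score_def using S(2) assms(1)
    by (intro member_le_sum) (auto simp: nonneg_rule_def)
  also have "\<dots> \<le> opt_JR_score f m n A k"
    using set_score_le_opt_JR_score[OF S(1)] .
  finally show ?thesis .
qed

lemma price_of_JR_le:
  assumes "nonneg_rule f" "approval_dependent f" "valid_instance m n A k" "1 \<le> k"
    and "\<exists>i<m. 0 < f m n A i"
  shows "price_of_JR f m n A k \<le> real k"
proof -
  let ?M = "Max (f m n A ` {..<m})"
  obtain j where j: "j < m" "0 < f m n A j" using assms(5) by blast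
  have "?M \<in> f m n A ` {..<m}" using j(1) by (intro Max_in) auto
  then obtain i where i: "i < m" "f m n A i = ?M" by auto
  have "f m n A j \<le> ?M" using j(1) by (intro Max_ge) auto
  then have M_pos: "0 < ?M" using j(2) by linarith
  have M_le: "?M \<le> opt_JR_score f m n A k"
    using score_le_opt_JR_score[OF assms(1-4), of i] i(2) M_pos by simp
  have "opt_score f m n A k \<le> real k * ?M"
    using assms(3) by (intro opt_score_le_mult) (auto simp: valid_instance_def)
  also have "\<dots> \<le> real k * opt_JR_score f m n A k"
    using M_le by (intro mult_left_mono) auto
  finally show ?thesis
    unfolding price_of_JR_def using M_pos M_le by (simp add: divide_le_eq)
qed

lemma f_DA_nonneg: "0 < \<gamma> \<Longrightarrow> nonneg_rule (f_DA \<gamma> grp)"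
  unfolding nonneg_rule_def f_DA_def by (intro allI, subst Min_ge_iff) auto

lemma f_DA_eq_0_if_group_disapproves:
  assumes "g < \<gamma>" "\<And>u. u < n \<Longrightarrow> grp u = g \<Longrightarrow> i \<notin> A u"
  shows "f_DA \<gamma> grp m n A i = 0"
proof (rule antisym)
  have "f_DA \<gamma> grp m n A i \<le>
      real (card {u\<in>{..<n}. grp u = g \<and> i \<in> A u}) / real (card {u\<in>{..<n}. grp u = g})"
    unfolding f_DA_def using assms(1) by (intro Min_le) auto
  moreover have "{u\<in>{..<n}. grp u = g \<and> i \<in> A u} = {}" using assms(2) by auto
  ultimately show "f_DA \<gamma> grp m n A i \<le> 0" by (metis card.empty div_0 of_nat_0)
  show "0 \<le> f_DA \<gamma> grp m n A i"
    using f_DA_nonneg assms(1) unfolding nonneg_rule_def by auto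
qed

lemma f_DA_approval_dependent: "0 < \<gamma> \<Longrightarrow> approval_dependent (f_DA \<gamma> grp)"
  unfolding approval_dependent_def by (auto intro: f_DA_eq_0_if_group_disapproves)

lemma f_DA_pos:
  assumes "0 < \<gamma>" "\<And>g. g < \<gamma> \<Longrightarrow> \<exists>u<n. grp u = g \<and> i \<in> A u"
  shows "0 < f_DA \<gamma> grp m n A i"
proof -
  have "0 < real (card {u\<in>{..<n}. grp u = g \<and> i \<in> A u}) / real (card {u\<in>{..<n}. grp u = g})"
    if "g < \<gamma>" for g
  proof -
    have "0 < card {u\<in>{..<n}. grp u = g \<and> i \<in> A u}"
      using assms(2)[OF that] by (auto simp: card_gt_0_iff)
    moreover have "card {u\<in>{..<n}. grp u = g \<and> i \<in> A u} \<le> card {u\<in>{..<n}. grp u = g}"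
      by (intro card_mono) auto
    ultimately show ?thesis by simp
  qed
  then show ?thesis unfolding f_DA_def using assms(1) by (subst Min_gr_iff) auto
qed

lemma f_DA_cong:
  assumes "\<And>u. u < n \<Longrightarrow> i \<in> A u \<longleftrightarrow> j \<in> A u"
  shows "f_DA \<gamma> grp m n A i = f_DA \<gamma> grp m n A j"
proof -
  have "{u\<in>{..<n}. grp u = g \<and> i \<in> A u} = {u\<in>{..<n}. grp u = g \<and> j \<in> A u}" for g
    using assms by auto
  then show ?thesis unfolding f_DA_def by simp
qed

lemma DA_prices_le:
  assumes "1 \<le> k" "0 < \<gamma>" "p \<in> DA_prices k \<gamma>"
  shows "p \<le> real k"
  using assms price_of_JR_le[OF f_DA_nonneg f_DA_approval_dependent]
  unfolding DA_prices_def by blast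

text \<open>
  The extremal instance has \<open>2k\<close> items and \<open>n = k\<gamma>\<close> users. Users \<open>u < \<gamma>\<close> form singleton groups
  and approve the top items \<open>{..<k}\<close>; all other users lie in group 0, and the block
  \<open>[j\<gamma>, (j+1)\<gamma>)\<close> (\<open>1 \<le> j < k\<close>) approves only item \<open>k + j\<close>. Item \<open>k\<close> is approved by nobody.
\<close>

definition tight_profile :: "nat \<Rightarrow> nat \<Rightarrow> profile" where
  "tight_profile \<gamma> k u = (if u < \<gamma> then {..<k} else {k + u div \<gamma>})"

definition tight_groups :: "nat \<Rightarrow> nat \<Rightarrow> nat" where
  "tight_groups \<gamma> u = (if u < \<gamma> then u else 0)"

context
  fixes k \<gamma> :: nat
  assumes k: "1 \<le> k" and \<gamma>: "1 < \<gamma>"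
begin

abbreviation tight_rule :: scoring_rule where
  "tight_rule \<equiv> f_DA \<gamma> (tight_groups \<gamma>)"

abbreviation tight_score :: "nat \<Rightarrow> real" where
  "tight_score \<equiv> tight_rule (2 * k) (k * \<gamma>) (tight_profile \<gamma> k)"

lemma less_k_mult_gamma: "g < \<gamma> \<Longrightarrow> g < k * \<gamma>"
  using k by (metis less_le_trans mult_1 mult_le_mono1)

lemma tight_valid_instance: "valid_instance (2 * k) (k * \<gamma>) (tight_profile \<gamma> k) k"
proof -
  have "u div \<gamma> < k" if "u < k * \<gamma>" for u
    using that by (rule less_mult_imp_div_less)
  then show ?thesis unfolding valid_instance_def tight_profile_def by auto
qed

lemma tight_group_partition: "group_partition (k * \<gamma>) \<gamma> (tight_groups \<gamma>)"
  using \<gamma> less_k_mult_gamma unfolding group_partition_def tight_groups_def by fastforce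

lemma tight_profile_top: "j < k \<Longrightarrow> j \<in> tight_profile \<gamma> k u \<longleftrightarrow> u < \<gamma>"
  unfolding tight_profile_def by auto

lemma tight_score_top: "i < k \<Longrightarrow> tight_score i = tight_score 0"
  using tight_profile_top k by (intro f_DA_cong) auto

lemma tight_score_pos: "0 < tight_score 0"
  using \<gamma> less_k_mult_gamma tight_profile_top[of 0] k
  by (intro f_DA_pos) (auto simp: tight_groups_def)

lemma tight_score_bottom: "k \<le> i \<Longrightarrow> tight_score i = 0"
  using \<gamma> by (intro f_DA_eq_0_if_group_disapproves[of 1]) (auto simp: tight_groups_def tight_profile_def)

lemma tight_score_le: "tight_score i \<le> tight_score 0"
  using tight_score_top[of i] tight_score_bottom[of i] tight_score_pos by (cases "i < k") auto

lemma tight_JR_contains_blocks: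
  assumes "satisfies_JR (2 * k) (k * \<gamma>) (tight_profile \<gamma> k) k S"
  shows "{Suc k..<2 * k} \<subseteq> S"
proof
  fix i assume i: "i \<in> {Suc k..<2 * k}"
  define j where "j = i - k"
  define B where "B = {j * \<gamma>..<Suc j * \<gamma>}"
  have j: "1 \<le> j" "j < k" using i unfolding j_def by auto
  have B_approves: "tight_profile \<gamma> k u = {i}" if "u \<in> B" for u
  proof -
    have "u div \<gamma> = j" using that unfolding B_def
      by (metis atLeastLessThan_iff div_nat_eqI mult.commute)
    moreover have "\<gamma> \<le> u"
      using le_trans[of \<gamma> "j * \<gamma>" u] j(1) that unfolding B_def by simp
    ultimately show ?thesis using i unfolding tight_profile_def j_def by auto
  qed
  have "Suc j * \<gamma> \<le> k * \<gamma>" using j(2) by (intro mult_le_mono1) simp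
  then have "B \<subseteq> {..<k * \<gamma>}" unfolding B_def by auto
  moreover have "B \<noteq> {}" using \<gamma> unfolding B_def by simp
  ultimately have "cohesive (k * \<gamma>) (tight_profile \<gamma> k) B"
    using B_approves unfolding cohesive_def by auto
  moreover have "real (k * \<gamma>) / real k \<le> real (card B)"
    using k unfolding B_def by simp
  ultimately have "represents (tight_profile \<gamma> k) S B"
    using assms unfolding satisfies_JR_def by blast
  then show "i \<in> S" using B_approves unfolding represents_def by auto
qed

lemma tight_opt_score:
  "opt_score tight_rule (2 * k) (k * \<gamma>) (tight_profile \<gamma> k) k = real k * tight_score 0"
proof (rule antisym)
  show "opt_score tight_rule (2 * k) (k * \<gamma>) (tight_profile \<gamma> k) k \<le> real k * tight_score 0"
    using tight_valid_instance tight_score_le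
    by (intro opt_score_le_mult) (auto simp: valid_instance_def)
  have "real k * tight_score 0 = (\<Sum>i<k. tight_score 0)" by simp
  also have "\<dots> = set_score tight_rule (2 * k) (k * \<gamma>) (tight_profile \<gamma> k) {..<k}"
    unfolding set_score_def by (rule sum.cong) (auto intro: tight_score_top[symmetric])
  also have "\<dots> \<le> opt_score tight_rule (2 * k) (k * \<gamma>) (tight_profile \<gamma> k) k"
    by (rule set_score_le_opt_score) auto
  finally show "real k * tight_score 0
      \<le> opt_score tight_rule (2 * k) (k * \<gamma>) (tight_profile \<gamma> k) k" .
qed

lemma tight_JR_set_score_le:
  assumes "satisfies_JR (2 * k) (k * \<gamma>) (tight_profile \<gamma> k) k S"
  shows "set_score tight_rule (2 * k) (k * \<gamma>) (tight_profile \<gamma> k) S \<le> tight_score 0"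
proof -
  have S: "S \<subseteq> {..<2 * k}" "card S = k" using assms unfolding satisfies_JR_def by auto
  have "card (S \<inter> {..<k}) + card {Suc k..<2 * k} \<le> card S"
    using S(1) tight_JR_contains_blocks[OF assms] by (intro card_disjoint_Un_le) (auto intro: finite_subset)
  then have card_top: "card (S \<inter> {..<k}) \<le> 1" using S(2) by simp
  have "set_score tight_rule (2 * k) (k * \<gamma>) (tight_profile \<gamma> k) S
      = (\<Sum>i\<in>S \<inter> {..<k}. tight_score i) + (\<Sum>i\<in>S - {..<k}. tight_score i)"
    unfolding set_score_def using finite_subset[OF S(1)] by (rule sum.Int_Diff) simp
  also have "\<dots> = (\<Sum>i\<in>S \<inter> {..<k}. tight_score 0)"
  proof -
    have "(\<Sum>i\<in>S - {..<k}. tight_score i) = 0"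
      using tight_score_bottom by (intro sum.neutral) auto
    moreover have "(\<Sum>i\<in>S \<inter> {..<k}. tight_score i) = (\<Sum>i\<in>S \<inter> {..<k}. tight_score 0)"
      by (rule sum.cong) (auto intro: tight_score_top)
    ultimately show ?thesis by simp
  qed
  also have "\<dots> = real (card (S \<inter> {..<k})) * tight_score 0"
    by simp
  also have "\<dots> \<le> tight_score 0"
    using card_top tight_score_pos by (simp add: mult_le_cancel_right1)
  finally show ?thesis .
qed

lemma tight_opt_JR_score:
  "opt_JR_score tight_rule (2 * k) (k * \<gamma>) (tight_profile \<gamma> k) k = tight_score 0"
proof (rule antisym)
  obtain S where "satisfies_JR (2 * k) (k * \<gamma>) (tight_profile \<gamma> k) k S"
    using exists_JR_set_containing[OF tight_valid_instance k, of 0 0] k \<gamma> by (auto simp: tight_profile_def)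
  then show "opt_JR_score tight_rule (2 * k) (k * \<gamma>) (tight_profile \<gamma> k) k \<le> tight_score 0"
    using tight_JR_set_score_le by (rule opt_JR_score_le)
  show "tight_score 0 \<le> opt_JR_score tight_rule (2 * k) (k * \<gamma>) (tight_profile \<gamma> k) k"
    using \<gamma> tight_score_pos
    by (intro score_le_opt_JR_score f_DA_nonneg f_DA_approval_dependent tight_valid_instance k) auto
qed

lemma real_mem_DA_prices: "real k \<in> DA_prices k \<gamma>"
proof -
  have "real k = price_of_JR tight_rule (2 * k) (k * \<gamma>) (tight_profile \<gamma> k) k"
    unfolding price_of_JR_def tight_opt_score tight_opt_JR_score using tight_score_pos by simp
  moreover have "\<exists>i<2 * k. 0 < tight_score i" using k tight_score_pos by (intro exI[of _ 0]) simp
  ultimately show ?thesis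
    unfolding DA_prices_def using tight_valid_instance tight_group_partition by blast
qed

end

theorem theorem1:
  fixes k :: nat
  assumes "k \<ge> 1"
  shows "(\<forall>f m n A. nonneg_rule f \<and> approval_dependent f \<and> valid_instance m n A k
            \<and> (\<exists>i<m. f m n A i > 0) \<longrightarrow> price_of_JR f m n A k \<le> real k)
       \<and> (\<forall>\<gamma>::nat. \<gamma> > 1 \<longrightarrow> real k \<in> DA_prices k \<gamma> \<and> (\<forall>p\<in>DA_prices k \<gamma>. p \<le> real k))"
proof (intro conjI allI impI ballI)
  fix f m n A
  assume "nonneg_rule f \<and> approval_dependent f \<and> valid_instance m n A k \<and> (\<exists>i<m. f m n A i > 0)"
  then show "price_of_JR f m n A k \<le> real k" using price_of_JR_le assms by blast
next
  fix \<gamma> :: nat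
  assume "\<gamma> > 1"
  then show "real k \<in> DA_prices k \<gamma>" using real_mem_DA_prices assms by blast
next
  fix \<gamma> :: nat and p
  assume "\<gamma> > 1" "p \<in> DA_prices k \<gamma>"
  then show "p \<le> real k" by (intro DA_prices_le[OF assms]) auto
qed

end
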